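(* Assume Condition (T) (see context) and let $\mathbf W=(W_1,\dots,W_d)$ be the solution of $\mathbf W\stackrel{d}{=}\mathbf A\mathbf W+\mathbf B$ independent of $(\mathbf A,\mathbf B)$. Then for every coordinate $i\in\{1,\dots,d\}$ and every $0<\alpha<\widetilde\alpha_i$ we have $\mathbb E W_i^{\alpha}<\infty$, where $\widetilde\alpha_i=\min\{\alpha_j:i\trianglelefteq j\}$.
   Context: Condition (T) on a random $d\times d$ matrix $\mathbf A$ and random vector $\mathbf B\in\mathbb R^d$: (T-1) $\mathbf A\ge 0$, $\mathbf B\ge 0$ entrywise a.s.; (T-2) $\mathbb P(B_i=0)<1$ for all $i$; (T-3) $\mathbb P(A_{ij}=0)=1$ whenever $i>j$; (T-4) there exist $\alpha_1,\dots,\alpha_d>0$, pairwise distinct, with $\mathbb E A_{ii}^{\alpha_i}=1$; (T-5) $\mathbb E A_{ij}^{\alpha_i}<\infty$ for all $i,j$; (T-6) $\mathbb E B_i^{\alpha_i}<\infty$; (T-7) $\mathbb E[A_{ii}^{\alpha_i}\log^+A_{ii}]<\infty$; (T-8) the law of $\log A_{ii}$ given $\{A_{ii}>0\}$ is non-arithmetic. (Under (T) the solution $\mathbf W$ exists and is unique in law.) A nonnegative random variable $X$ is positive if $\mathbb P(X>0)>0$. Write $i\trianglelefteq j$ if there exist $m\ge0$ and indices $i=i(0)\le\dots\le i(m)=j$ with $A_{i(k)i(k+1)}$ positive for each $k<m$. *)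

theory Defs
  imports "HOL-Probability.Probability"
begin

definition positive_rv :: "'a measure \<Rightarrow> ('a \<Rightarrow> real) \<Rightarrow> bool" where
  "positive_rv M X \<longleftrightarrow> measure M {\<omega> \<in> space M. X \<omega> > 0} > 0"

definition tri_step :: "'a measure \<Rightarrow> ('a \<Rightarrow> ((real, 'n::{finite,linorder}) vec, 'n) vec) \<Rightarrow> ('n \<times> 'n) set" where
  "tri_step M A = {(k, l). k \<le> l \<and> positive_rv M (\<lambda>\<omega>. A \<omega> $ k $ l)}"

definition tri_le :: "'a measure \<Rightarrow> ('a \<Rightarrow> ((real, 'n::{finite,linorder}) vec, 'n) vec) \<Rightarrow> 'n \<Rightarrow> 'n \<Rightarrow> bool" where
  "tri_le M A i j \<longleftrightarrow> (i, j) \<in> (tri_step M A)\<^sup>*"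

definition alpha_tilde :: "'a measure \<Rightarrow> ('a \<Rightarrow> ((real, 'n::{finite,linorder}) vec, 'n) vec) \<Rightarrow> ('n \<Rightarrow> real) \<Rightarrow> 'n \<Rightarrow> real" where
  "alpha_tilde M A \<alpha> i = Min (\<alpha> ` {j. tri_le M A i j})"

definition log_nonarithmetic :: "'a measure \<Rightarrow> ('a \<Rightarrow> real) \<Rightarrow> bool" where
  "log_nonarithmetic M X \<longleftrightarrow>
     \<not> (\<exists>h>0. AE \<omega> in M. X \<omega> > 0 \<longrightarrow> ln (X \<omega>) \<in> range (\<lambda>k::int. h * of_int k))"

definition condition_T :: "'a measure \<Rightarrow> ('a \<Rightarrow> ((real, 'n::{finite,linorder}) vec, 'n) vec) \<Rightarrow> ('a \<Rightarrow> (real, 'n) vec) \<Rightarrow> ('n \<Rightarrow> real) \<Rightarrow> bool" where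
  "condition_T M A B \<alpha> \<longleftrightarrow>
     (AE \<omega> in M. (\<forall>i j. A \<omega> $ i $ j \<ge> 0) \<and> (\<forall>i. B \<omega> $ i \<ge> 0)) \<and>
     (\<forall>i. measure M {\<omega> \<in> space M. B \<omega> $ i = 0} < 1) \<and>
     (\<forall>i j. i > j \<longrightarrow> measure M {\<omega> \<in> space M. A \<omega> $ i $ j = 0} = 1) \<and>
     (\<forall>i. \<alpha> i > 0) \<and> inj \<alpha> \<and>
     (\<forall>i. (\<integral>\<^sup>+\<omega>. ennreal (A \<omega> $ i $ i powr \<alpha> i) \<partial>M) = 1) \<and>
     (\<forall>i j. (\<integral>\<^sup>+\<omega>. ennreal (A \<omega> $ i $ j powr \<alpha> i) \<partial>M) < \<infinity>) \<and>
     (\<forall>i. (\<integral>\<^sup>+\<omega>. ennreal (B \<omega> $ i powr \<alpha> i) \<partial>M) < \<infinity>) \<and>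
     (\<forall>i. (\<integral>\<^sup>+\<omega>. ennreal (A \<omega> $ i $ i powr \<alpha> i * max 0 (ln (A \<omega> $ i $ i))) \<partial>M) < \<infinity>) \<and>
     (\<forall>i. log_nonarithmetic M (\<lambda>\<omega>. A \<omega> $ i $ i))"

end

theory Submission
  imports Defs
begin

(* Induct downwards over the coordinate i.  The i-th coordinate of A W + B is at most
   A_ii |W_i| + R_i, where R_i is B_i plus the terms A_ij |W_j| with j \<noteq> i.  Such a term
   vanishes a.s. unless i < j and A_ij is positive, and then alpha_tilde i \<le> alpha_tilde j;
   so by independence of (A, B) and W and by induction R_i has a finite a-th moment.
   Since a < \<alpha>_i and E A_ii^\<alpha>_i = 1, strict concavity gives c = E A_ii^a < 1 unless
   A_ii = 1 a.s., which the non-arithmetic condition excludes.  Choosing K > 1 with K c < 1,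
   the truncated moments h(T, u) = E min(T, u |W_i|^a) satisfy h(T, u) \<le> h(T, K c u) + C u;
   iterating and letting T \<rightarrow> \<infinity> bounds E |W_i|^a by C / (1 - K c). *)

lemma borel_measurable_vec_component [measurable]:
  "(\<lambda>x::('b::topological_space, 'n::finite) vec. x $ i) \<in> borel_measurable borel"
  by (intro borel_measurable_continuous_onI continuous_intros)

lemma borel_measurable_fst_borel [measurable]:
  "fst \<in> borel_measurable (borel :: ('b::second_countable_topology \<times> 'c::second_countable_topology) measure)"
  by (simp flip: borel_prod)

lemma borel_measurable_matrix_vector_mult [measurable (raw)]:
  fixes f :: "'a \<Rightarrow> ((real, 'n::finite) vec, 'm::finite) vec" and g :: "'a \<Rightarrow> (real, 'n) vec"
  assumes "f \<in> borel_measurable M" "g \<in> borel_measurable M"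
  shows "(\<lambda>\<omega>. f \<omega> *v g \<omega>) \<in> borel_measurable M"
proof (rule borel_measurable_continuous_Pair[OF assms])
  show "continuous_on UNIV (\<lambda>p::((real, 'n) vec, 'm) vec \<times> (real, 'n) vec. fst p *v snd p)"
    unfolding matrix_vector_mult_def by (intro continuous_on_vec_lambda continuous_intros)
qed

lemma powr_le_one_plus_powr:
  fixes x a b :: real
  assumes "0 \<le> a" "a \<le> b"
  shows "x powr a \<le> 1 + x powr b"
proof (cases "x = 0 \<or> ln x \<le> 0")
  case True
  then have "x powr a \<le> 1"
    using assms by (auto simp: powr_def mult_nonneg_nonpos)
  then show ?thesis by (simp add: add_increasing2)
next
  case False
  then have "a * ln x \<le> b * ln x" using assms by (intro mult_right_mono) auto
  then show ?thesis using False by (simp add: powr_def add_increasing)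
qed

lemma powr_add_le_split:
  fixes a K :: real
  assumes "0 < a" "1 < K"
  obtains K' where "0 < K'"
    "\<And>x y. 0 \<le> x \<Longrightarrow> 0 \<le> y \<Longrightarrow> (x + y) powr a \<le> K * x powr a + K' * y powr a"
proof
  define d where "d = K powr (1/a) - 1"
  have "1 < K powr (1/a)" using assms powr_less_mono2[of "1/a" 1 K] by simp
  then have d: "0 < d" by (simp add: d_def)
  have Kd: "(1 + d) powr a = K" using assms by (simp add: d_def powr_powr)
  have "0 < 1/d + 1" using d by (simp add: add_pos_pos)
  then show "0 < (1/d + 1) powr a" by simp
  fix x y :: real assume xy: "0 \<le> x" "0 \<le> y"
  show "(x + y) powr a \<le> K * x powr a + (1/d + 1) powr a * y powr a"
  proof (cases "y \<le> d * x")
    case True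
    have "(x + y) powr a \<le> ((1 + d) * x) powr a"
      using True xy d assms by (intro powr_mono2) (auto simp: algebra_simps)
    then show ?thesis by (simp add: powr_mult Kd add_increasing2)
  next
    case False
    then have "x \<le> y / d" using d by (simp add: field_simps)
    then have "(x + y) powr a \<le> ((1/d + 1) * y) powr a"
      using xy d assms by (intro powr_mono2) (auto simp: algebra_simps)
    then show ?thesis using assms by (simp add: powr_mult add_increasing)
  qed
qed

lemma powr_concave_gap:
  fixes y p :: real
  assumes "0 \<le> y" "0 < p" "p < 1"
  shows "y powr p + p * (1 - p) * (sqrt y - 1)^2 \<le> 1 + p * (y - 1)"
proof -
  define s where "s = sqrt y"
  have s: "0 \<le> s" "y = s^2" using assms by (auto simp: s_def)
  have "s powr p \<le> 1 + p * (s - 1)"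
  proof (cases "s = 0")
    case False
    then have "s powr p * 1 powr (1 - p) \<le> p * s + (1 - p) * 1"
      using s assms by (intro Youngs_inequality_0) auto
    then show ?thesis by (simp add: algebra_simps)
  qed (use assms in simp)
  then have "(s powr p)^2 \<le> (1 + p * (s - 1))^2" by (intro power_mono) auto
  moreover have "y powr p = (s powr p)^2" using s by (simp add: powr_powr power2_eq_square powr_mult)
  ultimately show ?thesis using s unfolding s_def[symmetric]
    by (simp add: power2_eq_square algebra_simps)
qed

lemma (in finite_measure) nn_integral_powr_finite_mono:
  assumes [measurable]: "X \<in> borel_measurable M"
    and "0 \<le> a" "a \<le> b" and fin: "(\<integral>\<^sup>+\<omega>. ennreal (X \<omega> powr b) \<partial>M) < \<infinity>"
  shows "(\<integral>\<^sup>+\<omega>. ennreal (X \<omega> powr a) \<partial>M) < \<infinity>"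
proof -
  have "(\<integral>\<^sup>+\<omega>. ennreal (X \<omega> powr a) \<partial>M) \<le> (\<integral>\<^sup>+\<omega>. 1 + ennreal (X \<omega> powr b) \<partial>M)"
  proof (intro nn_integral_mono)
    fix \<omega>
    have "ennreal (X \<omega> powr a) \<le> ennreal (1 + X \<omega> powr b)"
      using assms(2,3) by (intro ennreal_leI powr_le_one_plus_powr)
    then show "ennreal (X \<omega> powr a) \<le> 1 + ennreal (X \<omega> powr b)" by simp
  qed
  also have "\<dots> = emeasure M (space M) + (\<integral>\<^sup>+\<omega>. ennreal (X \<omega> powr b) \<partial>M)"
    by (subst nn_integral_add) auto
  also have "\<dots> < \<infinity>" using fin by (simp add: less_top[symmetric])
  finally show ?thesis .
qed

lemma nn_integral_powr_add_finite:
  fixes X Y :: "'a \<Rightarrow> real"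
  assumes [measurable]: "X \<in> borel_measurable M" "Y \<in> borel_measurable M"
    and nonneg: "AE \<omega> in M. 0 \<le> X \<omega> \<and> 0 \<le> Y \<omega>" and "0 < a"
    and fin: "(\<integral>\<^sup>+\<omega>. ennreal (X \<omega> powr a) \<partial>M) < \<infinity>" "(\<integral>\<^sup>+\<omega>. ennreal (Y \<omega> powr a) \<partial>M) < \<infinity>"
  shows "(\<integral>\<^sup>+\<omega>. ennreal ((X \<omega> + Y \<omega>) powr a) \<partial>M) < \<infinity>"
proof -
  have "(1::real) < 2" by simp
  then obtain K where K: "\<And>x y. 0 \<le> x \<Longrightarrow> 0 \<le> y \<Longrightarrow> (x + y) powr a \<le> 2 * x powr a + K * y powr a"
    using powr_add_le_split[OF \<open>0 < a\<close>] by blast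
  have "(\<integral>\<^sup>+\<omega>. ennreal ((X \<omega> + Y \<omega>) powr a) \<partial>M)
      \<le> (\<integral>\<^sup>+\<omega>. 2 * ennreal (X \<omega> powr a) + ennreal K * ennreal (Y \<omega> powr a) \<partial>M)"
    using nonneg
  proof (intro nn_integral_mono_AE, eventually_elim)
    case (elim \<omega>)
    then have "ennreal ((X \<omega> + Y \<omega>) powr a) \<le> ennreal (2 * X \<omega> powr a + K * Y \<omega> powr a)"
      by (intro ennreal_leI K) auto
    also have "\<dots> \<le> ennreal (2 * X \<omega> powr a) + ennreal (K * Y \<omega> powr a)"
      by (simp add: ennreal_plus_if)
    finally show ?case by (simp add: ennreal_mult'')
  qed
  also have "\<dots> = 2 * (\<integral>\<^sup>+\<omega>. ennreal (X \<omega> powr a) \<partial>M) + ennreal K * (\<integral>\<^sup>+\<omega>. ennreal (Y \<omega> powr a) \<partial>M)"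
    by (simp add: nn_integral_add nn_integral_cmult)
  also have "\<dots> < \<infinity>" using fin by (simp add: ennreal_mult_less_top)
  finally show ?thesis .
qed

lemma nn_integral_powr_sum_finite:
  fixes X :: "'i \<Rightarrow> 'a \<Rightarrow> real"
  assumes "finite S" and [measurable]: "\<And>j. j \<in> S \<Longrightarrow> X j \<in> borel_measurable M"
    and "\<And>j. j \<in> S \<Longrightarrow> AE \<omega> in M. 0 \<le> X j \<omega>" and "0 < a"
    and "\<And>j. j \<in> S \<Longrightarrow> (\<integral>\<^sup>+\<omega>. ennreal (X j \<omega> powr a) \<partial>M) < \<infinity>"
  shows "(\<integral>\<^sup>+\<omega>. ennreal ((\<Sum>j\<in>S. X j \<omega>) powr a) \<partial>M) < \<infinity>"
  using assms
proof (induction S rule: finite_induct)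
  case (insert j S)
  have "AE \<omega> in M. \<forall>k\<in>insert j S. 0 \<le> X k \<omega>"
    using insert by (subst AE_finite_all) auto
  then have "AE \<omega> in M. 0 \<le> X j \<omega> \<and> 0 \<le> (\<Sum>k\<in>S. X k \<omega>)"
    by eventually_elim (auto intro: sum_nonneg)
  moreover have "(\<lambda>\<omega>. \<Sum>k\<in>S. X k \<omega>) \<in> borel_measurable M"
    using insert by (intro borel_measurable_sum) auto
  ultimately have "(\<integral>\<^sup>+\<omega>. ennreal ((X j \<omega> + (\<Sum>k\<in>S. X k \<omega>)) powr a) \<partial>M) < \<infinity>"
    using insert by (intro nn_integral_powr_add_finite) auto
  then show ?case
    using insert by simp
qed (use \<open>0 < a\<close> in simp)

lemma (in prob_space) nn_integral_powr_less_one: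
  fixes Y :: "'a \<Rightarrow> real"
  assumes [measurable]: "Y \<in> borel_measurable M" and Y_nonneg: "\<And>\<omega>. 0 \<le> Y \<omega>"
    and mean: "(\<integral>\<^sup>+\<omega>. ennreal (Y \<omega>) \<partial>M) = 1" and p: "0 < p" "p < 1"
    and not_one: "\<not> (AE \<omega> in M. Y \<omega> = 1)"
  shows "(\<integral>\<^sup>+\<omega>. ennreal (Y \<omega> powr p) \<partial>M) < 1"
proof -
  define gap where "gap \<omega> = p * (1 - p) * (sqrt (Y \<omega>) - 1)^2" for \<omega>
  have gap_nonneg: "0 \<le> gap \<omega>" for \<omega> using p by (simp add: gap_def)
  have "(\<integral>\<^sup>+\<omega>. ennreal (Y \<omega> powr p) \<partial>M) + (\<integral>\<^sup>+\<omega>. ennreal (gap \<omega>) \<partial>M)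
      = (\<integral>\<^sup>+\<omega>. ennreal (Y \<omega> powr p + gap \<omega>) \<partial>M)"
    using gap_nonneg by (subst nn_integral_add[symmetric]) (auto simp: gap_def)
  also have "\<dots> \<le> (\<integral>\<^sup>+\<omega>. ennreal (1 - p) + ennreal p * ennreal (Y \<omega>) \<partial>M)"
  proof (intro nn_integral_mono)
    fix \<omega>
    have "ennreal (Y \<omega> powr p + gap \<omega>) \<le> ennreal ((1 - p) + p * Y \<omega>)"
      using powr_concave_gap[OF Y_nonneg p] by (intro ennreal_leI) (simp add: gap_def algebra_simps)
    also have "\<dots> = ennreal (1 - p) + ennreal p * ennreal (Y \<omega>)"
      using p Y_nonneg by (simp add: ennreal_mult)
    finally show "ennreal (Y \<omega> powr p + gap \<omega>) \<le> \<dots>" .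
  qed
  also have "\<dots> = 1"
    using p by (simp add: nn_integral_add nn_integral_cmult mean emeasure_space_1 flip: ennreal_plus)
  finally have sum_le: "(\<integral>\<^sup>+\<omega>. ennreal (Y \<omega> powr p) \<partial>M) + (\<integral>\<^sup>+\<omega>. ennreal (gap \<omega>) \<partial>M) \<le> 1" .
  have "\<not> (AE \<omega> in M. gap \<omega> = 0)"
    using not_one p by (auto simp: gap_def elim!: AE_mp[rotated])
  then have "(\<integral>\<^sup>+\<omega>. ennreal (gap \<omega>) \<partial>M) \<noteq> 0"
    using gap_nonneg by (subst nn_integral_0_iff_AE) (auto simp: gap_def)
  then have "(\<integral>\<^sup>+\<omega>. ennreal (Y \<omega> powr p) \<partial>M) + 0 < (\<integral>\<^sup>+\<omega>. ennreal (Y \<omega> powr p) \<partial>M) + (\<integral>\<^sup>+\<omega>. ennreal (gap \<omega>) \<partial>M)"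
    using sum_le by (subst ennreal_add_left_cancel_less) (auto simp: top_unique pos_add_strict zero_less_iff_neq_zero)
  from order.strict_trans2[OF this sum_le] show ?thesis by simp
qed

lemma (in prob_space) pair_measure_distr_eq_if_indep_set:
  assumes [measurable]: "X \<in> measurable M S" "Y \<in> measurable M T"
    and indep: "indep_set (sigma_sets (space M) {X -` A \<inter> space M | A. A \<in> sets S})
                          (sigma_sets (space M) {Y -` A \<inter> space M | A. A \<in> sets T})"
  shows "distr M S X \<Otimes>\<^sub>M distr M T Y = distr M (S \<Otimes>\<^sub>M T) (\<lambda>\<omega>. (X \<omega>, Y \<omega>))"
proof (rule pair_measure_eqI)
  show "sigma_finite_measure (distr M S X)" "sigma_finite_measure (distr M T Y)"
    by (auto intro!: prob_space_imp_sigma_finite prob_space_distr)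
  fix U V assume "U \<in> sets (distr M S X)" "V \<in> sets (distr M T Y)"
  then have [measurable]: "U \<in> sets S" "V \<in> sets T" by auto
  have "emeasure (distr M (S \<Otimes>\<^sub>M T) (\<lambda>\<omega>. (X \<omega>, Y \<omega>))) (U \<times> V)
      = emeasure M ((X -` U \<inter> space M) \<inter> (Y -` V \<inter> space M))"
    by (subst emeasure_distr) (auto intro!: arg_cong[where f="emeasure M"])
  also have "\<dots> = emeasure M (X -` U \<inter> space M) * emeasure M (Y -` V \<inter> space M)"
  proof -
    have "prob ((X -` U \<inter> space M) \<inter> (Y -` V \<inter> space M)) = prob (X -` U \<inter> space M) * prob (Y -` V \<inter> space M)"
      by (rule indep_setD[OF indep]) (auto intro!: sigma_sets.Basic)
    then show ?thesis by (simp add: emeasure_eq_measure ennreal_mult)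
  qed
  finally show "emeasure (distr M S X) U * emeasure (distr M T Y) V
      = emeasure (distr M (S \<Otimes>\<^sub>M T) (\<lambda>\<omega>. (X \<omega>, Y \<omega>))) (U \<times> V)"
    by (simp add: emeasure_distr)
qed simp

lemma (in prob_space) nn_integral_indep_set:
  assumes [measurable]: "X \<in> measurable M S" "Y \<in> measurable M T"
    and indep: "indep_set (sigma_sets (space M) {X -` A \<inter> space M | A. A \<in> sets S})
                          (sigma_sets (space M) {Y -` A \<inter> space M | A. A \<in> sets T})"
    and [measurable]: "F \<in> borel_measurable (S \<Otimes>\<^sub>M T)"
  shows "(\<integral>\<^sup>+\<omega>. F (X \<omega>, Y \<omega>) \<partial>M) = (\<integral>\<^sup>+y. (\<integral>\<^sup>+x. F (x, y) \<partial>distr M S X) \<partial>distr M T Y)"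
proof -
  note joint = pair_measure_distr_eq_if_indep_set[OF assms(1-3)]
  interpret X: prob_space "distr M S X" by (rule prob_space_distr) simp
  interpret Y: prob_space "distr M T Y" by (rule prob_space_distr) simp
  interpret pair_prob_space "distr M S X" "distr M T Y" ..
  have "(\<integral>\<^sup>+\<omega>. F (X \<omega>, Y \<omega>) \<partial>M) = (\<integral>\<^sup>+p. F p \<partial>distr M (S \<Otimes>\<^sub>M T) (\<lambda>\<omega>. (X \<omega>, Y \<omega>)))"
    by (subst nn_integral_distr) auto
  also have "\<dots> = (\<integral>\<^sup>+y. (\<integral>\<^sup>+x. F (x, y) \<partial>distr M S X) \<partial>distr M T Y)"
    unfolding joint[symmetric]
    by (rule nn_integral_snd[symmetric]) simp
  finally show ?thesis .
qed

lemma (in prob_space) nn_integral_indep_set_mult: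
  assumes [measurable]: "X \<in> measurable M S" "Y \<in> measurable M T"
    and indep: "indep_set (sigma_sets (space M) {X -` A \<inter> space M | A. A \<in> sets S})
                          (sigma_sets (space M) {Y -` A \<inter> space M | A. A \<in> sets T})"
    and [measurable]: "f \<in> borel_measurable S" "g \<in> borel_measurable T"
  shows "(\<integral>\<^sup>+\<omega>. f (X \<omega>) * g (Y \<omega>) \<partial>M) = (\<integral>\<^sup>+\<omega>. f (X \<omega>) \<partial>M) * (\<integral>\<^sup>+\<omega>. g (Y \<omega>) \<partial>M)"
proof -
  have "(\<integral>\<^sup>+\<omega>. f (X \<omega>) * g (Y \<omega>) \<partial>M) = (\<integral>\<^sup>+y. (\<integral>\<^sup>+x. f x \<partial>distr M S X) * g y \<partial>distr M T Y)"
    using nn_integral_indep_set[OF assms(1-3), of "\<lambda>p. f (fst p) * g (snd p)"]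
    by (simp add: nn_integral_multc)
  also have "\<dots> = (\<integral>\<^sup>+\<omega>. f (X \<omega>) \<partial>M) * (\<integral>\<^sup>+\<omega>. g (Y \<omega>) \<partial>M)"
    by (simp add: nn_integral_cmult nn_integral_distr)
  finally show ?thesis .
qed

lemma (in prob_space) nn_integral_min_le_min:
  assumes [measurable]: "Z \<in> borel_measurable M"
    and mean: "(\<integral>\<^sup>+\<omega>. ennreal (Z \<omega>) \<partial>M) = ennreal c" and "0 \<le> s"
  shows "(\<integral>\<^sup>+\<omega>. ennreal (min T (s * Z \<omega>)) \<partial>M) \<le> ennreal (min T (s * c))"
proof -
  have "(\<integral>\<^sup>+\<omega>. ennreal (min T (s * Z \<omega>)) \<partial>M) \<le> (\<integral>\<^sup>+\<omega>. ennreal T \<partial>M)"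
    by (intro nn_integral_mono ennreal_leI) simp
  then have le_T: "(\<integral>\<^sup>+\<omega>. ennreal (min T (s * Z \<omega>)) \<partial>M) \<le> ennreal T"
    by (simp add: emeasure_space_1)
  have "(\<integral>\<^sup>+\<omega>. ennreal (min T (s * Z \<omega>)) \<partial>M) \<le> (\<integral>\<^sup>+\<omega>. ennreal s * ennreal (Z \<omega>) \<partial>M)"
    using \<open>0 \<le> s\<close> by (intro nn_integral_mono) (simp add: ennreal_leI flip: ennreal_mult')
  then have le_sc: "(\<integral>\<^sup>+\<omega>. ennreal (min T (s * Z \<omega>)) \<partial>M) \<le> ennreal (s * c)"
    using \<open>0 \<le> s\<close> by (simp add: nn_integral_cmult mean ennreal_mult')
  show ?thesis
    using le_T le_sc by (cases "T \<le> s * c") (auto simp: min_def)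
qed

lemma (in finite_measure) INF_nn_integral_min_power_eq_0:
  assumes [measurable]: "X \<in> borel_measurable M"
    and "\<And>\<omega>. 0 \<le> X \<omega>" "0 \<le> q" "q < 1" "0 \<le> T"
  shows "(INF n. \<integral>\<^sup>+\<omega>. ennreal (min T (q ^ n * X \<omega>)) \<partial>M) = 0"
proof -
  define f where "f n \<omega> = ennreal (min T (q ^ n * X \<omega>))" for n \<omega>
  have dec: "f (Suc n) \<omega> \<le> f n \<omega>" for n \<omega>
    using assms(2-4) unfolding f_def
    by (intro ennreal_leI min.mono mult_right_mono power_decreasing) auto
  have "(\<integral>\<^sup>+\<omega>. f 0 \<omega> \<partial>M) \<le> (\<integral>\<^sup>+\<omega>. ennreal T \<partial>M)"
    unfolding f_def by (intro nn_integral_mono ennreal_leI) auto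
  then have f0_finite: "(\<integral>\<^sup>+\<omega>. f 0 \<omega> \<partial>M) < \<infinity>"
    by (rule order_le_less_trans) (simp add: ennreal_mult_eq_top_iff less_top[symmetric])
  have "(\<lambda>n. min T (q ^ n * X \<omega>)) \<longlonglongrightarrow> min T (0 * X \<omega>)" for \<omega>
    using assms(3,4) by (intro tendsto_min tendsto_const tendsto_mult LIMSEQ_power_zero) auto
  then have "(\<lambda>n. f n \<omega>) \<longlonglongrightarrow> ennreal 0" for \<omega>
    using assms(5) unfolding f_def by (intro tendsto_ennrealI) (simp add: min_absorb2)
  moreover have "(\<lambda>n. f n \<omega>) \<longlonglongrightarrow> (INF n. f n \<omega>)" for \<omega>
    using dec by (intro LIMSEQ_INF decseq_SucI) auto
  ultimately have "(INF n. f n \<omega>) = 0" for \<omega>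
    using LIMSEQ_unique by (metis ennreal_0)
  moreover have "(\<integral>\<^sup>+\<omega>. (INF n. f n \<omega>) \<partial>M) = (INF n. \<integral>\<^sup>+\<omega>. f n \<omega> \<partial>M)"
    using f0_finite dec by (intro nn_integral_monotone_convergence_INF_AE') (auto simp: f_def)
  ultimately show ?thesis by (simp add: f_def)
qed

lemma (in finite_measure) nn_integral_le_of_truncated_contraction:
  assumes [measurable]: "X \<in> borel_measurable M"
    and nonneg: "\<And>\<omega>. 0 \<le> X \<omega>" and q: "0 \<le> q" "q < 1"
    and step: "\<And>T u. 0 \<le> T \<Longrightarrow> 0 \<le> u \<Longrightarrow>
      (\<integral>\<^sup>+\<omega>. ennreal (min T (u * X \<omega>)) \<partial>M)
        \<le> (\<integral>\<^sup>+\<omega>. ennreal (min T (q * u * X \<omega>)) \<partial>M) + ennreal u * C"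
  shows "(\<integral>\<^sup>+\<omega>. ennreal (X \<omega>) \<partial>M) \<le> ennreal (1 / (1 - q)) * C"
proof -
  define h where "h T u = (\<integral>\<^sup>+\<omega>. ennreal (min T (u * X \<omega>)) \<partial>M)" for T u
  have iterate: "h T 1 \<le> h T (q ^ n) + ennreal (\<Sum>k<n. q ^ k) * C" if "0 \<le> T" for T n
  proof (induction n)
    case (Suc n)
    have "h T 1 \<le> h T (q ^ n) + ennreal (\<Sum>k<n. q ^ k) * C" by (fact Suc.IH)
    also have "\<dots> \<le> h T (q ^ Suc n) + ennreal (q ^ n) * C + ennreal (\<Sum>k<n. q ^ k) * C"
      using step[OF that, of "q ^ n"] q unfolding h_def by (simp add: add_right_mono)
    also have "\<dots> = h T (q ^ Suc n) + (ennreal (q ^ n) + ennreal (\<Sum>k<n. q ^ k)) * C"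
      by (simp add: distrib_right add.assoc)
    also have "ennreal (q ^ n) + ennreal (\<Sum>k<n. q ^ k) = ennreal (\<Sum>k<Suc n. q ^ k)"
      using q by (simp add: sum_nonneg add.commute)
    finally show ?case .
  qed (simp add: h_def)
  have geometric: "ennreal (\<Sum>k<n. q ^ k) \<le> ennreal (1 / (1 - q))" for n
  proof (intro ennreal_leI)
    have "(\<Sum>k<n. q ^ k) = (1 - q ^ n) / (1 - q)" using q by (simp add: sum_gp_strict)
    also have "\<dots> \<le> 1 / (1 - q)" using q by (intro divide_right_mono) auto
    finally show "(\<Sum>k<n. q ^ k) \<le> 1 / (1 - q)" .
  qed
  have truncated_bound: "h T 1 \<le> ennreal (1 / (1 - q)) * C" if "0 \<le> T" for T
  proof -
    have "h T 1 \<le> h T (q ^ n) + ennreal (1 / (1 - q)) * C" for n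
      using order_trans[OF iterate[OF that] add_left_mono[OF mult_right_mono[OF geometric]]] by simp
    then have "h T 1 \<le> (INF n. h T (q ^ n) + ennreal (1 / (1 - q)) * C)"
      by (rule INF_greatest)
    also have "\<dots> = (INF n. h T (q ^ n)) + ennreal (1 / (1 - q)) * C"
      by (rule INF_ennreal_add_const)
    also have "(INF n. h T (q ^ n)) = 0"
      unfolding h_def by (rule INF_nn_integral_min_power_eq_0[OF _ nonneg q that]) simp
    finally show ?thesis by simp
  qed
  have "(\<integral>\<^sup>+\<omega>. ennreal (X \<omega>) \<partial>M) = (\<integral>\<^sup>+\<omega>. (SUP n. ennreal (min (real n) (X \<omega>))) \<partial>M)"
  proof (intro nn_integral_cong antisym)
    fix \<omega>
    obtain n :: nat where "X \<omega> \<le> real n" using real_arch_simple by blast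
    then show "ennreal (X \<omega>) \<le> (SUP n. ennreal (min (real n) (X \<omega>)))"
      by (intro SUP_upper2[of n]) auto
    show "(SUP n. ennreal (min (real n) (X \<omega>))) \<le> ennreal (X \<omega>)"
      by (intro SUP_least ennreal_leI) auto
  qed
  also have "\<dots> = (SUP n. h (real n) 1)"
    unfolding h_def
    by (subst nn_integral_monotone_convergence_SUP) (auto intro!: incseq_SucI le_funI ennreal_leI)
  also have "\<dots> \<le> ennreal (1 / (1 - q)) * C"
    by (intro SUP_least truncated_bound) auto
  finally show ?thesis .
qed

lemma alpha_tilde_le: "alpha_tilde M A \<alpha> i \<le> \<alpha> i"
  unfolding alpha_tilde_def tri_le_def by (intro Min_le) auto

lemma alpha_tilde_mono:
  assumes "i \<le> j" "positive_rv M (\<lambda>\<omega>. A \<omega> $ i $ j)"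
  shows "alpha_tilde M A \<alpha> i \<le> alpha_tilde M A \<alpha> j"
proof -
  have "{k. tri_le M A j k} \<subseteq> {k. tri_le M A i k}"
    using assms unfolding tri_le_def tri_step_def by (auto intro: converse_rtrancl_into_rtrancl)
  then show ?thesis
    unfolding alpha_tilde_def by (intro Min_antimono image_mono) (auto simp: tri_le_def)
qed

locale perpetuity = prob_space M for M :: "'a measure" +
  fixes A :: "'a \<Rightarrow> ((real, 'n::{finite,linorder}) vec, 'n) vec"
    and B W :: "'a \<Rightarrow> (real, 'n) vec"
    and \<alpha> :: "'n \<Rightarrow> real"
  assumes A_measurable [measurable]: "A \<in> borel_measurable M"
    and B_measurable [measurable]: "B \<in> borel_measurable M"
    and W_measurable [measurable]: "W \<in> borel_measurable M"
    and condition_T: "condition_T M A B \<alpha>"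
    and indep: "indep_set
       (sigma_sets (space M) {(\<lambda>\<omega>. (A \<omega>, B \<omega>)) -` S \<inter> space M | S. S \<in> sets borel})
       (sigma_sets (space M) {W -` S \<inter> space M | S. S \<in> sets borel})"
    and fixpoint: "distr M borel W = distr M borel (\<lambda>\<omega>. A \<omega> *v W \<omega> + B \<omega>)"
begin

lemma nn_integral_fixpoint:
  assumes [measurable]: "f \<in> borel_measurable borel"
  shows "(\<integral>\<^sup>+\<omega>. f (W \<omega>) \<partial>M) = (\<integral>\<^sup>+\<omega>. f (A \<omega> *v W \<omega> + B \<omega>) \<partial>M)"
  using arg_cong[OF fixpoint, of "\<lambda>N. integral\<^sup>N N f"] by (simp add: nn_integral_distr)

lemma AE_coefficients_nonneg: "AE \<omega> in M. (\<forall>i j. 0 \<le> A \<omega> $ i $ j) \<and> (\<forall>i. 0 \<le> B \<omega> $ i)"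
  using condition_T unfolding condition_T_def by blast

lemma alpha_pos: "0 < \<alpha> i"
  using condition_T unfolding condition_T_def by blast

lemma AE_entry_eq_0:
  assumes "\<not> (i \<le> j \<and> positive_rv M (\<lambda>\<omega>. A \<omega> $ i $ j))"
  shows "AE \<omega> in M. A \<omega> $ i $ j = 0"
proof (cases "j < i")
  case True
  then have "prob {\<omega> \<in> space M. A \<omega> $ i $ j = 0} = 1"
    using condition_T unfolding condition_T_def by blast
  moreover have "{\<omega> \<in> space M. A \<omega> $ i $ j = 0} \<in> events" by measurable
  ultimately show ?thesis by (simp add: prob_Collect_eq_1)
next
  case False
  then have "prob {\<omega> \<in> space M. 0 < A \<omega> $ i $ j} = 0"
    using assms measure_nonneg[of M] unfolding positive_rv_def by (meson antisym not_less)
  moreover have "{\<omega> \<in> space M. 0 < A \<omega> $ i $ j} \<in> events" by measurable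
  ultimately have "AE \<omega> in M. \<not> 0 < A \<omega> $ i $ j" by (simp add: prob_Collect_eq_0)
  with AE_coefficients_nonneg show ?thesis by eventually_elim (metis order.antisym not_less)
qed

lemma entry_moment_finite:
  assumes "0 \<le> a" "a \<le> \<alpha> i"
  shows "(\<integral>\<^sup>+\<omega>. ennreal (A \<omega> $ i $ j powr a) \<partial>M) < \<infinity>"
proof (rule nn_integral_powr_finite_mono[OF _ assms])
  show "(\<integral>\<^sup>+\<omega>. ennreal (A \<omega> $ i $ j powr \<alpha> i) \<partial>M) < \<infinity>"
    using condition_T unfolding condition_T_def by blast
qed measurable

lemma B_moment_finite:
  assumes "0 \<le> a" "a \<le> \<alpha> i"
  shows "(\<integral>\<^sup>+\<omega>. ennreal (B \<omega> $ i powr a) \<partial>M) < \<infinity>"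
proof (rule nn_integral_powr_finite_mono[OF _ assms])
  show "(\<integral>\<^sup>+\<omega>. ennreal (B \<omega> $ i powr \<alpha> i) \<partial>M) < \<infinity>"
    using condition_T unfolding condition_T_def by blast
qed measurable

lemma diagonal_moment_less_one:
  assumes "0 < a" "a < \<alpha> i"
  shows "(\<integral>\<^sup>+\<omega>. ennreal (A \<omega> $ i $ i powr a) \<partial>M) < 1"
proof -
  define Y where "Y \<omega> = A \<omega> $ i $ i powr \<alpha> i" for \<omega>
  have p: "0 < a / \<alpha> i" "a / \<alpha> i < 1" using assms alpha_pos[of i] by auto
  have "\<not> (AE \<omega> in M. Y \<omega> = 1)"
  proof
    assume "AE \<omega> in M. Y \<omega> = 1"
    then have "AE \<omega> in M. 0 < A \<omega> $ i $ i \<longrightarrow> ln (A \<omega> $ i $ i) \<in> range (\<lambda>k::int. 1 * of_int k)"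
      by eventually_elim (use alpha_pos[of i] in \<open>auto simp: Y_def powr_def split: if_splits\<close>)
    then show False
      using condition_T unfolding condition_T_def log_nonarithmetic_def by (meson zero_less_one)
  qed
  moreover have "(\<integral>\<^sup>+\<omega>. ennreal (Y \<omega>) \<partial>M) = 1"
    using condition_T unfolding condition_T_def Y_def by blast
  ultimately have "(\<integral>\<^sup>+\<omega>. ennreal (Y \<omega> powr (a / \<alpha> i)) \<partial>M) < 1"
    by (intro nn_integral_powr_less_one p) (auto simp: Y_def)
  then show ?thesis
    using alpha_pos[of i] by (simp add: Y_def powr_powr)
qed

definition remainder :: "'n \<Rightarrow> 'a \<Rightarrow> real" where
  "remainder i \<omega> = (\<Sum>j\<in>UNIV - {i}. A \<omega> $ i $ j * \<bar>W \<omega> $ j\<bar>) + B \<omega> $ i"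

lemma remainder_measurable [measurable]: "remainder i \<in> borel_measurable M"
  unfolding remainder_def by measurable

lemma coordinate_le_diagonal_plus_remainder:
  assumes "\<forall>i j. 0 \<le> A \<omega> $ i $ j" "\<forall>i. 0 \<le> B \<omega> $ i"
  shows "\<bar>(A \<omega> *v W \<omega> + B \<omega>) $ i\<bar> \<le> A \<omega> $ i $ i * \<bar>W \<omega> $ i\<bar> + remainder i \<omega>"
proof -
  have "\<bar>(A \<omega> *v W \<omega> + B \<omega>) $ i\<bar> \<le> (\<Sum>j\<in>UNIV. \<bar>A \<omega> $ i $ j * W \<omega> $ j\<bar>) + \<bar>B \<omega> $ i\<bar>"
    unfolding matrix_vector_mult_def by (simp add: order_trans[OF abs_triangle_ineq add_right_mono[OF sum_abs]])
  also have "\<dots> = (\<Sum>j\<in>UNIV. A \<omega> $ i $ j * \<bar>W \<omega> $ j\<bar>) + B \<omega> $ i"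
    using assms by (simp add: abs_mult)
  also have "\<dots> = A \<omega> $ i $ i * \<bar>W \<omega> $ i\<bar> + remainder i \<omega>"
    unfolding remainder_def by (simp add: sum.remove[of UNIV i] add.assoc)
  finally show ?thesis .
qed

lemma remainder_nonneg:
  assumes "\<forall>i j. 0 \<le> A \<omega> $ i $ j" "\<forall>i. 0 \<le> B \<omega> $ i"
  shows "0 \<le> remainder i \<omega>"
  unfolding remainder_def using assms by (intro add_nonneg_nonneg sum_nonneg) auto

lemma off_diagonal_moment_finite:
  assumes a: "0 \<le> a" "a \<le> \<alpha> i" and "j \<noteq> i"
    and W_j: "i < j \<Longrightarrow> positive_rv M (\<lambda>\<omega>. A \<omega> $ i $ j) \<Longrightarrow> (\<integral>\<^sup>+\<omega>. ennreal (\<bar>W \<omega> $ j\<bar> powr a) \<partial>M) < \<infinity>"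
  shows "(\<integral>\<^sup>+\<omega>. ennreal ((A \<omega> $ i $ j * \<bar>W \<omega> $ j\<bar>) powr a) \<partial>M) < \<infinity>"
proof (cases "i < j \<and> positive_rv M (\<lambda>\<omega>. A \<omega> $ i $ j)")
  case True
  have "(\<integral>\<^sup>+\<omega>. ennreal ((A \<omega> $ i $ j * \<bar>W \<omega> $ j\<bar>) powr a) \<partial>M)
      = (\<integral>\<^sup>+\<omega>. ennreal (fst (A \<omega>, B \<omega>) $ i $ j powr a) * ennreal (\<bar>W \<omega> $ j\<bar> powr a) \<partial>M)"
    using AE_coefficients_nonneg by (intro nn_integral_cong_AE) (auto simp: powr_mult ennreal_mult)
  also have "\<dots> = (\<integral>\<^sup>+\<omega>. ennreal (A \<omega> $ i $ j powr a) \<partial>M) * (\<integral>\<^sup>+\<omega>. ennreal (\<bar>W \<omega> $ j\<bar> powr a) \<partial>M)"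
    by (subst nn_integral_indep_set_mult[OF _ _ indep]) auto
  also have "\<dots> < \<infinity>"
    using entry_moment_finite[OF a] W_j True by (simp add: ennreal_mult_less_top)
  finally show ?thesis .
next
  case False
  then have "AE \<omega> in M. A \<omega> $ i $ j = 0"
    using \<open>j \<noteq> i\<close> by (intro AE_entry_eq_0) auto
  then have "(\<integral>\<^sup>+\<omega>. ennreal ((A \<omega> $ i $ j * \<bar>W \<omega> $ j\<bar>) powr a) \<partial>M) = 0"
    by (subst nn_integral_0_iff_AE) (auto elim!: eventually_mono)
  then show ?thesis by simp
qed

lemma remainder_moment_finite:
  assumes "0 < a" "a \<le> \<alpha> i"
    and off_diagonal: "\<And>j. j \<noteq> i \<Longrightarrow> (\<integral>\<^sup>+\<omega>. ennreal ((A \<omega> $ i $ j * \<bar>W \<omega> $ j\<bar>) powr a) \<partial>M) < \<infinity>"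
  shows "(\<integral>\<^sup>+\<omega>. ennreal (remainder i \<omega> powr a) \<partial>M) < \<infinity>"
  unfolding remainder_def
proof (rule nn_integral_powr_add_finite)
  show "AE \<omega> in M. 0 \<le> (\<Sum>j\<in>UNIV - {i}. A \<omega> $ i $ j * \<bar>W \<omega> $ j\<bar>) \<and> 0 \<le> B \<omega> $ i"
    using AE_coefficients_nonneg by eventually_elim (auto intro: sum_nonneg)
  show "(\<integral>\<^sup>+\<omega>. ennreal ((\<Sum>j\<in>UNIV - {i}. A \<omega> $ i $ j * \<bar>W \<omega> $ j\<bar>) powr a) \<partial>M) < \<infinity>"
    using AE_coefficients_nonneg assms by (intro nn_integral_powr_sum_finite) (auto elim!: eventually_mono)
  show "(\<integral>\<^sup>+\<omega>. ennreal (B \<omega> $ i powr a) \<partial>M) < \<infinity>"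
    using assms by (intro B_moment_finite) auto
qed (use assms in auto)

lemma AE_truncated_coordinate_le:
  assumes "0 < a" "0 \<le> K" "0 \<le> K'" "0 \<le> u"
    and split: "\<And>x y. 0 \<le> x \<Longrightarrow> 0 \<le> y \<Longrightarrow> (x + y) powr a \<le> K * x powr a + K' * y powr a"
  shows "AE \<omega> in M. ennreal (min T (u * \<bar>(A \<omega> *v W \<omega> + B \<omega>) $ i\<bar> powr a))
    \<le> ennreal (min T (K * u * A \<omega> $ i $ i powr a * \<bar>W \<omega> $ i\<bar> powr a))
       + ennreal u * (ennreal K' * ennreal (remainder i \<omega> powr a))"
  using AE_coefficients_nonneg
proof eventually_elim
  case (elim \<omega>)
  then have nonneg: "0 \<le> A \<omega> $ i $ i" "0 \<le> remainder i \<omega>"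
    by (auto intro: remainder_nonneg)
  have "\<bar>(A \<omega> *v W \<omega> + B \<omega>) $ i\<bar> powr a \<le> (A \<omega> $ i $ i * \<bar>W \<omega> $ i\<bar> + remainder i \<omega>) powr a"
    using elim \<open>0 < a\<close> by (intro powr_mono2 coordinate_le_diagonal_plus_remainder) auto
  also have "\<dots> \<le> K * (A \<omega> $ i $ i powr a * \<bar>W \<omega> $ i\<bar> powr a) + K' * remainder i \<omega> powr a"
    using split[of "A \<omega> $ i $ i * \<bar>W \<omega> $ i\<bar>" "remainder i \<omega>"] nonneg by (simp add: powr_mult)
  finally have "u * \<bar>(A \<omega> *v W \<omega> + B \<omega>) $ i\<bar> powr a
      \<le> u * (K * (A \<omega> $ i $ i powr a * \<bar>W \<omega> $ i\<bar> powr a) + K' * remainder i \<omega> powr a)"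
    using \<open>0 \<le> u\<close> by (rule mult_left_mono)
  then have "u * \<bar>(A \<omega> *v W \<omega> + B \<omega>) $ i\<bar> powr a
      \<le> K * u * A \<omega> $ i $ i powr a * \<bar>W \<omega> $ i\<bar> powr a + u * (K' * remainder i \<omega> powr a)"
    by (simp add: algebra_simps)
  moreover have rest_nonneg: "0 \<le> u * (K' * remainder i \<omega> powr a)"
    using assms by simp
  ultimately have "min T (u * \<bar>(A \<omega> *v W \<omega> + B \<omega>) $ i\<bar> powr a)
      \<le> min T (K * u * A \<omega> $ i $ i powr a * \<bar>W \<omega> $ i\<bar> powr a) + u * (K' * remainder i \<omega> powr a)"
    by linarith
  then have "ennreal (min T (u * \<bar>(A \<omega> *v W \<omega> + B \<omega>) $ i\<bar> powr a))
      \<le> ennreal (min T (K * u * A \<omega> $ i $ i powr a * \<bar>W \<omega> $ i\<bar> powr a) + u * (K' * remainder i \<omega> powr a))"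
    by (rule ennreal_leI)
  also have "\<dots> \<le> ennreal (min T (K * u * A \<omega> $ i $ i powr a * \<bar>W \<omega> $ i\<bar> powr a))
      + ennreal (u * (K' * remainder i \<omega> powr a))"
    using rest_nonneg by (auto simp: ennreal_plus_if intro: ennreal_leI)
  finally show ?case
    using assms by (simp add: ennreal_mult)
qed

lemma nn_integral_truncated_diagonal_le:
  assumes "0 \<le> s" and c: "(\<integral>\<^sup>+\<omega>. ennreal (A \<omega> $ i $ i powr a) \<partial>M) = ennreal c"
  shows "(\<integral>\<^sup>+\<omega>. ennreal (min T (s * A \<omega> $ i $ i powr a * \<bar>W \<omega> $ i\<bar> powr a)) \<partial>M)
    \<le> (\<integral>\<^sup>+\<omega>. ennreal (min T (s * c * \<bar>W \<omega> $ i\<bar> powr a)) \<partial>M)"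
proof -
  define \<nu> where "\<nu> = distr M borel (\<lambda>\<omega>. (A \<omega>, B \<omega>))"
  interpret \<nu>: prob_space \<nu> unfolding \<nu>_def by (rule prob_space_distr) simp
  have "(\<integral>\<^sup>+\<omega>. ennreal (min T (s * A \<omega> $ i $ i powr a * \<bar>W \<omega> $ i\<bar> powr a)) \<partial>M)
      = (\<integral>\<^sup>+w. (\<integral>\<^sup>+x. ennreal (min T ((s * \<bar>w $ i\<bar> powr a) * fst x $ i $ i powr a)) \<partial>\<nu>) \<partial>distr M borel W)"
    unfolding \<nu>_def
    using nn_integral_indep_set[OF _ _ indep,
        of "\<lambda>(x, w). ennreal (min T ((s * \<bar>w $ i\<bar> powr a) * fst x $ i $ i powr a))"]
    by (simp add: mult_ac)
  also have "\<dots> \<le> (\<integral>\<^sup>+w. ennreal (min T ((s * \<bar>w $ i\<bar> powr a) * c)) \<partial>distr M borel W)"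
  proof (intro nn_integral_mono \<nu>.nn_integral_min_le_min)
    show "(\<integral>\<^sup>+x. ennreal (fst x $ i $ i powr a) \<partial>\<nu>) = ennreal c"
      unfolding \<nu>_def by (subst nn_integral_distr) (auto simp: c)
  qed (auto simp: \<nu>_def \<open>0 \<le> s\<close>)
  also have "\<dots> = (\<integral>\<^sup>+\<omega>. ennreal (min T (s * c * \<bar>W \<omega> $ i\<bar> powr a)) \<partial>M)"
    by (subst nn_integral_distr) (auto simp: mult_ac)
  finally show ?thesis .
qed

lemma truncated_moment_contraction:
  assumes "0 < a" "0 \<le> K" "0 \<le> K'" "0 \<le> u"
    and split: "\<And>x y. 0 \<le> x \<Longrightarrow> 0 \<le> y \<Longrightarrow> (x + y) powr a \<le> K * x powr a + K' * y powr a"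
    and c: "(\<integral>\<^sup>+\<omega>. ennreal (A \<omega> $ i $ i powr a) \<partial>M) = ennreal c"
  shows "(\<integral>\<^sup>+\<omega>. ennreal (min T (u * \<bar>W \<omega> $ i\<bar> powr a)) \<partial>M)
    \<le> (\<integral>\<^sup>+\<omega>. ennreal (min T (K * c * u * \<bar>W \<omega> $ i\<bar> powr a)) \<partial>M)
       + ennreal u * (ennreal K' * (\<integral>\<^sup>+\<omega>. ennreal (remainder i \<omega> powr a) \<partial>M))"
proof -
  have "(\<integral>\<^sup>+\<omega>. ennreal (min T (u * \<bar>W \<omega> $ i\<bar> powr a)) \<partial>M)
      = (\<integral>\<^sup>+\<omega>. ennreal (min T (u * \<bar>(A \<omega> *v W \<omega> + B \<omega>) $ i\<bar> powr a)) \<partial>M)"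
    by (rule nn_integral_fixpoint[where f = "\<lambda>v. ennreal (min T (u * \<bar>v $ i\<bar> powr a))"]) simp
  also have "\<dots> \<le> (\<integral>\<^sup>+\<omega>. ennreal (min T (K * u * A \<omega> $ i $ i powr a * \<bar>W \<omega> $ i\<bar> powr a))
       + ennreal u * (ennreal K' * ennreal (remainder i \<omega> powr a)) \<partial>M)"
    using assms by (intro nn_integral_mono_AE AE_truncated_coordinate_le)
  also have "\<dots> = (\<integral>\<^sup>+\<omega>. ennreal (min T (K * u * A \<omega> $ i $ i powr a * \<bar>W \<omega> $ i\<bar> powr a)) \<partial>M)
       + ennreal u * (ennreal K' * (\<integral>\<^sup>+\<omega>. ennreal (remainder i \<omega> powr a) \<partial>M))"
    by (simp add: nn_integral_add nn_integral_cmult)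
  also have "\<dots> \<le> (\<integral>\<^sup>+\<omega>. ennreal (min T (K * u * c * \<bar>W \<omega> $ i\<bar> powr a)) \<partial>M)
       + ennreal u * (ennreal K' * (\<integral>\<^sup>+\<omega>. ennreal (remainder i \<omega> powr a) \<partial>M))"
    using assms by (intro add_right_mono nn_integral_truncated_diagonal_le) auto
  finally show ?thesis by (simp add: mult_ac)
qed

lemma moment_finite_if_remainder_finite:
  assumes a: "0 < a" "a < \<alpha> i"
    and remainder_finite: "(\<integral>\<^sup>+\<omega>. ennreal (remainder i \<omega> powr a) \<partial>M) < \<infinity>"
  shows "(\<integral>\<^sup>+\<omega>. ennreal (\<bar>W \<omega> $ i\<bar> powr a) \<partial>M) < \<infinity>"
proof -
  obtain c where c: "(\<integral>\<^sup>+\<omega>. ennreal (A \<omega> $ i $ i powr a) \<partial>M) = ennreal c" "0 \<le> c" "c < 1"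
    using diagonal_moment_less_one[OF a]
    by (cases "\<integral>\<^sup>+\<omega>. ennreal (A \<omega> $ i $ i powr a) \<partial>M") (auto simp: ennreal_less_iff)
  define K where "K = 2 / (1 + c)"
  have K: "1 < K" "K * c < 1" "0 \<le> K * c"
    using c by (auto simp: K_def field_simps)
  obtain K' where K': "0 < K'"
    "\<And>x y. 0 \<le> x \<Longrightarrow> 0 \<le> y \<Longrightarrow> (x + y) powr a \<le> K * x powr a + K' * y powr a"
    using powr_add_le_split[OF \<open>0 < a\<close> \<open>1 < K\<close>] by blast
  have "(\<integral>\<^sup>+\<omega>. ennreal (\<bar>W \<omega> $ i\<bar> powr a) \<partial>M)
      \<le> ennreal (1 / (1 - K * c)) * (ennreal K' * (\<integral>\<^sup>+\<omega>. ennreal (remainder i \<omega> powr a) \<partial>M))"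
  proof (rule nn_integral_le_of_truncated_contraction)
    fix T u :: real assume "0 \<le> u"
    with K K' show "(\<integral>\<^sup>+\<omega>. ennreal (min T (u * \<bar>W \<omega> $ i\<bar> powr a)) \<partial>M)
      \<le> (\<integral>\<^sup>+\<omega>. ennreal (min T (K * c * u * \<bar>W \<omega> $ i\<bar> powr a)) \<partial>M)
         + ennreal u * (ennreal K' * (\<integral>\<^sup>+\<omega>. ennreal (remainder i \<omega> powr a) \<partial>M))"
      by (intro truncated_moment_contraction[OF \<open>0 < a\<close> _ _ _ _ c(1)]) auto
  qed (use K in auto)
  also have "\<dots> < \<infinity>"
    using remainder_finite by (simp add: ennreal_mult_less_top)
  finally show ?thesis .
qed

lemma moment_finite:
  assumes "0 < a" "a < alpha_tilde M A \<alpha> i"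
  shows "(\<integral>\<^sup>+\<omega>. ennreal (\<bar>W \<omega> $ i\<bar> powr a) \<partial>M) < \<infinity>"
  using assms(2)
proof (induction i rule: measure_induct_rule[where f = "\<lambda>i. card {j. i < j}"])
  case (less i)
  have a_less: "a < \<alpha> i"
    using less.prems alpha_tilde_le[of M A \<alpha> i] by simp
  have "(\<integral>\<^sup>+\<omega>. ennreal (\<bar>W \<omega> $ j\<bar> powr a) \<partial>M) < \<infinity>"
    if "i < j" "positive_rv M (\<lambda>\<omega>. A \<omega> $ i $ j)" for j
  proof (rule less.IH)
    show "card {k. j < k} < card {k. i < k}"
      using \<open>i < j\<close> by (intro psubset_card_mono) auto
    show "a < alpha_tilde M A \<alpha> j"
      using alpha_tilde_mono[OF less_imp_le[OF that(1)] that(2), of \<alpha>] less.prems by simp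
  qed
  then have "(\<integral>\<^sup>+\<omega>. ennreal ((A \<omega> $ i $ j * \<bar>W \<omega> $ j\<bar>) powr a) \<partial>M) < \<infinity>" if "j \<noteq> i" for j
    using \<open>0 < a\<close> a_less that by (intro off_diagonal_moment_finite) auto
  then have "(\<integral>\<^sup>+\<omega>. ennreal (remainder i \<omega> powr a) \<partial>M) < \<infinity>"
    using \<open>0 < a\<close> a_less by (intro remainder_moment_finite) auto
  then show ?case
    by (rule moment_finite_if_remainder_finite[OF \<open>0 < a\<close> a_less])
qed

end

theorem lemma4p2:
  fixes M :: "'a measure"
    and A :: "'a \<Rightarrow> ((real, 'n::{finite,linorder}) vec, 'n) vec"
    and B W :: "'a \<Rightarrow> (real, 'n) vec"
    and \<alpha> :: "'n \<Rightarrow> real"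
  assumes "prob_space M"
    and "A \<in> borel_measurable M" and "B \<in> borel_measurable M" and "W \<in> borel_measurable M"
    and "condition_T M A B \<alpha>"
    and "prob_space.indep_set M
       (sigma_sets (space M) {(\<lambda>\<omega>. (A \<omega>, B \<omega>)) -` S \<inter> space M | S. S \<in> sets borel})
       (sigma_sets (space M) {W -` S \<inter> space M | S. S \<in> sets borel})"
    and "distr M borel W = distr M borel (\<lambda>\<omega>. A \<omega> *v W \<omega> + B \<omega>)"
    and "0 < a" and "a < alpha_tilde M A \<alpha> i"
  shows "(\<integral>\<^sup>+\<omega>. ennreal (\<bar>W \<omega> $ i\<bar> powr a) \<partial>M) < \<infinity>"
proof -
  interpret perpetuity M A B W \<alpha>
    using assms(1-7) by (simp add: perpetuity_def perpetuity_axioms_def)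
  show ?thesis
    using assms(8,9) by (rule moment_finite)
qed

end
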